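(* Let $G=(V,E)$ be a computation graph with $n=|V|$ vertices, evaluated in parallel on $p$ processors, each with a private fast memory of size $M$. Let $\lambda_1(\tilde L)\le\dots\le\lambda_n(\tilde L)$ be the eigenvalues of $\tilde L$ in increasing order. Then for every positive integer $k$, in any such parallel evaluation at least one processor incurs a number of I/Os $J^*_G$ satisfying $$J^*_G \;\geq\; \left\lfloor\frac{n}{kp}\right\rfloor \sum_{i=1}^k \lambda_i(\tilde L) \;-\; 2kM.$$
   Context: A computation graph is a finite directed acyclic graph $G=(V,E)$. Each vertex is an operation producing a single element, and an edge $(u,v)$ means the result of $u$ is an operand of $v$. Parallel execution model: there are $p$ processors, each with its own fast memory holding at most $M$ elements, together with unbounded slow memory. Every vertex is evaluated exactly once (no recomputation) by exactly one processor, respecting the dependencies of $G$. No assumption is made on how the work is distributed among processors. To evaluate a vertex, all its operands must be in the evaluating processor's fast memory. A value that is evicted while still needed must first be written out. The I/O of a processor counts each element it communicates with slow memory or with another processor. As in the sequential non-trivial I/O convention, inputs can be placed directly into fast memory and outputs reported at no cost. $\tilde L=\tilde D-\tilde A$ is the Laplacian of the weighted undirected graph $\tilde G$ on $V$. For each directed edge $(u,v)\in E$, $\tilde G$ contains the undirected edge $\{u,v\}$ with weight $1/d_{out}(u)$, where $d_{out}$ is out-degree in $G$. *)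

theory Defs
  imports "Jordan_Normal_Form.Char_Poly"
begin

definition comp_graph :: "nat \<Rightarrow> (nat \<times> nat) set \<Rightarrow> bool" where
  "comp_graph n E \<longleftrightarrow> E \<subseteq> {0..<n} \<times> {0..<n} \<and> acyclic E"

definition out_deg :: "(nat \<times> nat) set \<Rightarrow> nat \<Rightarrow> nat" where
  "out_deg E u = card {v. (u, v) \<in> E}"

text \<open>Adjacency weight of the undirected graph: edge {u,v} with weight 1/d_out(u)
  for each directed edge (u,v) in E.\<close>
definition lap_weight :: "(nat \<times> nat) set \<Rightarrow> nat \<Rightarrow> nat \<Rightarrow> real" where
  "lap_weight E u v =
     (if (u, v) \<in> E then 1 / real (out_deg E u) else 0) +
     (if (v, u) \<in> E then 1 / real (out_deg E v) else 0)"

definition laplacian :: "nat \<Rightarrow> (nat \<times> nat) set \<Rightarrow> real mat" where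
  "laplacian n E = mat n n (\<lambda>(i, j).
     (if i = j then (\<Sum>w<n. lap_weight E i w) else 0) - lap_weight E i j)"

text \<open>ls lists the eigenvalues (with algebraic multiplicity) in increasing order.\<close>
definition sorted_eigenvalues :: "real mat \<Rightarrow> real list \<Rightarrow> bool" where
  "sorted_eigenvalues A ls \<longleftrightarrow>
     sorted ls \<and> char_poly A = (\<Prod>a\<leftarrow>ls. [:- a, 1:])"

datatype move =
    Compute nat nat      \<comment> \<open>processor j evaluates vertex v\<close>
  | Evict nat nat        \<comment> \<open>processor j discards v from fast memory\<close>
  | Store nat nat        \<comment> \<open>processor j writes v to slow memory\<close>
  | Load nat nat         \<comment> \<open>processor j reads v from slow memory\<close>
  | Send nat nat nat     \<comment> \<open>processor j sends v to processor j'\<close>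

text \<open>State: fast memory contents of each processor, slow memory contents,
  set of already evaluated vertices.\<close>
type_synonym pstate = "(nat \<Rightarrow> nat set) \<times> nat set \<times> nat set"

fun step :: "nat \<Rightarrow> (nat \<times> nat) set \<Rightarrow> nat \<Rightarrow> nat \<Rightarrow> move \<Rightarrow> pstate \<Rightarrow> pstate option" where
  "step n E p M (Compute j v) (R, S, C) =
     (if j < p \<and> v < n \<and> v \<notin> C \<and> (\<forall>u. (u, v) \<in> E \<longrightarrow> u \<in> R j)
         \<and> card (insert v (R j)) \<le> M
      then Some (R(j := insert v (R j)), S, insert v C) else None)"
| "step n E p M (Evict j v) (R, S, C) =
     (if j < p \<and> v \<in> R j then Some (R(j := R j - {v}), S, C) else None)"
| "step n E p M (Store j v) (R, S, C) =
     (if j < p \<and> v \<in> R j then Some (R, insert v S, C) else None)"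
| "step n E p M (Load j v) (R, S, C) =
     (if j < p \<and> v \<in> S \<and> card (insert v (R j)) \<le> M
      then Some (R(j := insert v (R j)), S, C) else None)"
| "step n E p M (Send j j' v) (R, S, C) =
     (if j < p \<and> j' < p \<and> j \<noteq> j' \<and> v \<in> R j \<and> card (insert v (R j')) \<le> M
      then Some (R(j' := insert v (R j')), S, C) else None)"

fun exec :: "nat \<Rightarrow> (nat \<times> nat) set \<Rightarrow> nat \<Rightarrow> nat \<Rightarrow> move list \<Rightarrow> pstate \<Rightarrow> pstate option" where
  "exec n E p M [] st = Some st"
| "exec n E p M (m # ms) st =
     (case step n E p M m st of None \<Rightarrow> None | Some st' \<Rightarrow> exec n E p M ms st')"

text \<open>A valid parallel evaluation: starting with empty memories, every move is legal
  and at the end every vertex has been evaluated (exactly once, enforced by step).\<close>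
definition valid_par_schedule :: "nat \<Rightarrow> (nat \<times> nat) set \<Rightarrow> nat \<Rightarrow> nat \<Rightarrow> move list \<Rightarrow> bool" where
  "valid_par_schedule n E p M ms \<longleftrightarrow>
     (\<exists>R S. exec n E p M ms (\<lambda>_. {}, {}, {}) = Some (R, S, {0..<n}))"

fun move_io :: "nat \<Rightarrow> move \<Rightarrow> nat" where
  "move_io j (Compute _ _) = 0"
| "move_io j (Evict _ _) = 0"
| "move_io j (Store i _) = (if i = j then 1 else 0)"
| "move_io j (Load i _) = (if i = j then 1 else 0)"
| "move_io j (Send i i' _) = (if i = j then 1 else 0) + (if i' = j then 1 else 0)"

definition proc_io :: "nat \<Rightarrow> move list \<Rightarrow> nat" where
  "proc_io j ms = (\<Sum>m\<leftarrow>ms. move_io j m)"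

end

theory Submission
  imports Defs "Jordan_Normal_Form.Schur_Decomposition"
begin

(* Some processor j evaluates at least n/p vertices, hence at least k m of them, where
   m = n div (k p).  Cut the sequence of its evaluations into k consecutive segments of m
   vertices V_1, ..., V_k.  A vertex of V_i with a successor outside V_i must still be in the
   fast memory of j at the end of the segment or have been written out by j during it; a
   predecessor outside V_i of a vertex of V_i must have been in the fast memory of j at the
   start of the segment or have been read in during it.  So the boundaries of the V_i have
   total size at most 2 k M plus the I/O of j.

   On the other hand, the out-edges of a vertex carry total weight 1 in the Laplacian, so the
   quadratic form of the Laplacian at the indicator vector of V_i is at most the size of the
   boundary of V_i.  The normalised indicator vectors of the V_i are orthonormal, so by Ky Fan's
   principle the sum of these quadratic forms is at least m times the sum of the k smallest
   eigenvalues. *)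

section \<open>Orthogonal diagonalisation of real symmetric matrices\<close>

definition normalize_vec :: "real vec \<Rightarrow> real vec" where
  "normalize_vec v = (1 / sqrt (v \<bullet> v)) \<cdot>\<^sub>v v"

lemma normalize_vec_carrier [simp]: "v \<in> carrier_vec n \<Longrightarrow> normalize_vec v \<in> carrier_vec n"
  unfolding normalize_vec_def by simp

lemma normalize_vec_scalar_prod:
  assumes "v \<in> carrier_vec n" "w \<in> carrier_vec n"
  shows "normalize_vec v \<bullet> normalize_vec w = (v \<bullet> w) / (sqrt (v \<bullet> v) * sqrt (w \<bullet> w))"
  using assms unfolding normalize_vec_def
  by (simp add: smult_scalar_prod_distrib[OF _ assms(2)] scalar_prod_smult_distrib[OF assms(1)])

lemma normalize_vec_unit:
  assumes "v \<in> carrier_vec n" "v \<noteq> 0\<^sub>v n"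
  shows "normalize_vec v \<bullet> normalize_vec v = 1"
proof -
  have "v \<bullet> v > 0" using conjugate_square_greater_0_vec[OF assms(1)] assms(2) by simp
  thus ?thesis using normalize_vec_scalar_prod[OF assms(1) assms(1)] by simp
qed

lemma unit_eigenvector_exists:
  fixes A :: "real mat"
  assumes A: "A \<in> carrier_mat n n" and ev: "eigenvalue A e"
  obtains v where "v \<in> carrier_vec n" "v \<bullet> v = 1" "A *\<^sub>v v = e \<cdot>\<^sub>v v"
proof -
  obtain v where v: "v \<in> carrier_vec n" "v \<noteq> 0\<^sub>v n" "A *\<^sub>v v = e \<cdot>\<^sub>v v"
    using find_eigenvector[OF A ev] A unfolding eigenvector_def by auto
  show thesis
  proof
    show "normalize_vec v \<in> carrier_vec n" using v(1) by simp
    show "normalize_vec v \<bullet> normalize_vec v = 1" using normalize_vec_unit[OF v(1,2)] .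
    show "A *\<^sub>v normalize_vec v = e \<cdot>\<^sub>v normalize_vec v"
      unfolding normalize_vec_def using v A by (simp add: mult_mat_vec smult_smult_assoc mult.commute)
  qed
qed

lemma orthonormal_mat_of_cols:
  fixes ws :: "real vec list"
  assumes ws: "set ws \<subseteq> carrier_vec n" "corthogonal ws" "length ws = n"
  defines "W \<equiv> mat_of_cols n (map normalize_vec ws)"
  shows "W \<in> carrier_mat n n" and "transpose_mat W * W = 1\<^sub>m n"
    and "\<And>i. i < n \<Longrightarrow> col W i = normalize_vec (ws ! i)"
proof -
  have wsc: "\<And>i. i < n \<Longrightarrow> ws ! i \<in> carrier_vec n" using ws by (auto simp: set_conv_nth)
  show W: "W \<in> carrier_mat n n" unfolding W_def using ws by auto
  show colW: "col W i = normalize_vec (ws ! i)" if "i < n" for i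
    unfolding W_def using that ws wsc by simp
  have orth: "col W i \<bullet> col W j = (if i = j then 1 else 0)" if "i < n" "j < n" for i j
  proof (cases "i = j")
    case True
    have "ws ! i \<noteq> 0\<^sub>v n"
      using corthogonalD[OF ws(2), of i i] that wsc[of i] ws(3) by auto
    thus ?thesis using True that normalize_vec_unit[OF wsc] by (simp add: colW)
  next
    case False
    thus ?thesis using that corthogonalD[OF ws(2), of i j] ws(3)
      by (simp add: colW normalize_vec_scalar_prod[OF wsc wsc])
  qed
  show "transpose_mat W * W = 1\<^sub>m n" by (rule eq_matI) (use W in \<open>auto simp: orth\<close>)
qed

lemma orthogonal_mat_extending_unit_vector:
  fixes v :: "real vec"
  assumes v: "v \<in> carrier_vec n" "v \<bullet> v = 1"
  obtains W where "W \<in> carrier_mat n n" "transpose_mat W * W = 1\<^sub>m n" "col W 0 = v"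
proof -
  have v0: "v \<noteq> 0\<^sub>v n" using v by auto
  have "n \<noteq> 0"
  proof
    assume "n = 0"
    hence "v \<bullet> v = 0" using v(1) by (simp add: scalar_prod_def)
    with v(2) show False by simp
  qed
  interpret cof_vec_space n "TYPE(real)" .
  define b where "b = basis_completion v"
  from basis_completion[OF v(1) v0, folded b_def]
  have b: "distinct b" "\<not> lin_dep (set b)" "set b \<subseteq> carrier_vec n" "hd b = v" "length b = n"
    by auto
  with \<open>n \<noteq> 0\<close> obtain vs where bv: "b = v # vs" by (cases b) auto
  define ws where "ws = gram_schmidt n b"
  from gram_schmidt_result[OF b(3,1,2) refl, folded ws_def]
  have ws: "set ws \<subseteq> carrier_vec n" "corthogonal ws" "length ws = n"
    by (auto simp: b(5))
  have "ws ! 0 = v"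
    using gram_schmidt_hd[OF v(1), of vs, folded bv ws_def] ws(3) \<open>n \<noteq> 0\<close> by (cases ws) auto
  hence "col (mat_of_cols n (map normalize_vec ws)) 0 = v"
    using orthonormal_mat_of_cols(3)[OF ws, of 0] \<open>n \<noteq> 0\<close> v unfolding normalize_vec_def by simp
  thus thesis using that orthonormal_mat_of_cols(1,2)[OF ws] by blast
qed

lemma transpose_congruence_symmetric:
  fixes A W :: "'a::comm_semiring_0 mat"
  assumes A: "A \<in> carrier_mat n n" "transpose_mat A = A" and W: "W \<in> carrier_mat n m"
  shows "transpose_mat (transpose_mat W * A * W) = transpose_mat W * A * W"
proof -
  have "transpose_mat (transpose_mat W * A * W) = transpose_mat W * transpose_mat (transpose_mat W * A)"
    by (rule transpose_mult[of _ m n _ m]) (use A W in auto)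
  also have "transpose_mat (transpose_mat W * A) = A * W"
    using transpose_mult[of "transpose_mat W" m n A n] A W by simp
  finally show ?thesis using A W by (simp add: assoc_mult_mat[of _ m n _ n _ m])
qed

lemma orthogonal_congruence_similar:
  fixes A W :: "'a::field mat"
  assumes A: "A \<in> carrier_mat n n" and W: "W \<in> carrier_mat n n" "transpose_mat W * W = 1\<^sub>m n"
  shows "similar_mat (transpose_mat W * A * W) A"
proof -
  have WWt: "W * transpose_mat W = 1\<^sub>m n"
    using mat_mult_left_right_inverse[of "transpose_mat W" n W] W by simp
  have "W * (transpose_mat W * A * W) * transpose_mat W = (W * transpose_mat W) * A * (W * transpose_mat W)"
    using A W by (simp add: assoc_mult_mat[of _ n n _ n _ n])
  hence "A = W * (transpose_mat W * A * W) * transpose_mat W"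
    using A WWt by simp
  hence "similar_mat_wit (transpose_mat W * A * W) A (transpose_mat W) W"
    using A W WWt by (intro similar_mat_witI[of _ _ n]) (auto simp: assoc_mult_mat[of _ n n _ n _ n])
  thus ?thesis unfolding similar_mat_def by blast
qed

lemma orthogonal_mult:
  fixes W X :: "'a::comm_ring_1 mat"
  assumes "W \<in> carrier_mat n n" "transpose_mat W * W = 1\<^sub>m n"
    and "X \<in> carrier_mat n n" "transpose_mat X * X = 1\<^sub>m n"
  shows "transpose_mat (W * X) * (W * X) = 1\<^sub>m n"
proof -
  have "transpose_mat (W * X) * (W * X) = transpose_mat X * (transpose_mat W * (W * X))"
    using assms by (simp add: transpose_mult[of _ n n _ n] assoc_mult_mat[of _ n n _ n _ n])
  also have "transpose_mat W * (W * X) = (transpose_mat W * W) * X"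
    using assms by (subst assoc_mult_mat[of _ n n _ n _ n]) auto
  also have "\<dots> = X" using assms by simp
  finally show ?thesis using assms by simp
qed

lemma congruence_mult:
  fixes A W X :: "'a::comm_ring_1 mat"
  assumes "A \<in> carrier_mat n n" "W \<in> carrier_mat n n" "X \<in> carrier_mat n n"
  shows "transpose_mat (W * X) * A * (W * X) = transpose_mat X * (transpose_mat W * A * W) * X"
  using assms by (simp add: transpose_mult[of _ n n _ n] assoc_mult_mat[of _ n n _ n _ n])

lemma orthogonal_congruence_eigenvector_col:
  fixes A W :: "'a::comm_ring_1 mat"
  assumes A: "A \<in> carrier_mat n n" and W: "W \<in> carrier_mat n n" "transpose_mat W * W = 1\<^sub>m n"
    and ev: "A *\<^sub>v col W 0 = e \<cdot>\<^sub>v col W 0" and i: "i < n"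
  shows "(transpose_mat W * A * W) $$ (i, 0) = (if i = 0 then e else 0)"
proof -
  have "(transpose_mat W * A * W) $$ (i, 0) = col W i \<bullet> col (A * W) 0"
    using A W i by simp
  also have "col (A * W) 0 = e \<cdot>\<^sub>v col W 0"
    using col_mult2[OF A W(1), of 0] ev i by simp
  also have "col W i \<bullet> (e \<cdot>\<^sub>v col W 0) = e * (col W i \<bullet> col W 0)"
    using W i by simp
  also have "col W i \<bullet> col W 0 = (transpose_mat W * W) $$ (i, 0)"
    using W(1) i by simp
  also have "\<dots> = (if i = 0 then 1 else 0)"
    unfolding W(2) using i by simp
  finally show ?thesis by simp
qed

lemma orthogonal_congruence_eigenvector_block:
  fixes A W :: "real mat"
  assumes A: "A \<in> carrier_mat (Suc n) (Suc n)" "transpose_mat A = A"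
    and W: "W \<in> carrier_mat (Suc n) (Suc n)" "transpose_mat W * W = 1\<^sub>m (Suc n)"
    and ev: "A *\<^sub>v col W 0 = e \<cdot>\<^sub>v col W 0"
  obtains B where "B \<in> carrier_mat n n" "transpose_mat B = B"
    "transpose_mat W * A * W = four_block_mat (mat 1 1 (\<lambda>_. e)) (0\<^sub>m 1 n) (0\<^sub>m n 1) B"
proof -
  define A' where "A' = transpose_mat W * A * W"
  have A': "A' \<in> carrier_mat (Suc n) (Suc n)" unfolding A'_def using A W by auto
  have sym: "transpose_mat A' = A'"
    unfolding A'_def by (rule transpose_congruence_symmetric[OF A W(1)])
  have col0: "A' $$ (i, 0) = (if i = 0 then e else 0)" if "i < Suc n" for i
    unfolding A'_def using orthogonal_congruence_eigenvector_col[OF A(1) W ev that] .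
  have row0: "A' $$ (0, j) = (if j = 0 then e else 0)" if j: "j < Suc n" for j
    using col0[OF j] arg_cong[OF sym, of "\<lambda>B. B $$ (j, 0)"] A' j by simp
  define B where "B = mat n n (\<lambda>(i, j). A' $$ (Suc i, Suc j))"
  show thesis
  proof
    show "B \<in> carrier_mat n n" unfolding B_def by simp
    show "transpose_mat B = B"
    proof (rule eq_matI)
      fix i j assume "i < dim_row B" "j < dim_col B"
      thus "transpose_mat B $$ (i, j) = B $$ (i, j)"
        using arg_cong[OF sym, of "\<lambda>B. B $$ (Suc i, Suc j)"] A' by (simp add: B_def)
    qed (simp_all add: B_def)
    show "transpose_mat W * A * W = four_block_mat (mat 1 1 (\<lambda>_. e)) (0\<^sub>m 1 n) (0\<^sub>m n 1) B"
      unfolding A'_def[symmetric]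
    proof (rule eq_matI)
      fix i j assume "i < dim_row (four_block_mat (mat 1 1 (\<lambda>_. e)) (0\<^sub>m 1 n) (0\<^sub>m n 1) B)"
        "j < dim_col (four_block_mat (mat 1 1 (\<lambda>_. e)) (0\<^sub>m 1 n) (0\<^sub>m n 1) B)"
      hence "i < Suc n" "j < Suc n" by (auto simp: B_def)
      thus "A' $$ (i, j) = four_block_mat (mat 1 1 (\<lambda>_. e)) (0\<^sub>m 1 n) (0\<^sub>m n 1) B $$ (i, j)"
        using col0 row0 by (cases i; cases j) (auto simp: B_def)
    qed (use A' in \<open>auto simp: B_def\<close>)
  qed
qed

lemma char_poly_eigen_block:
  fixes B :: "'a::comm_ring_1 mat"
  assumes "B \<in> carrier_mat n n"
  shows "char_poly (four_block_mat (mat 1 1 (\<lambda>_. e)) (0\<^sub>m 1 n) (0\<^sub>m n 1) B) = [:- e, 1:] * char_poly B"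
proof -
  have "char_poly (mat 1 1 (\<lambda>_. e)) = [:- e, 1:]"
    by (simp add: char_poly_defs det_def sign_def)
  thus ?thesis using char_poly_four_block_zeros_col[of "mat 1 1 (\<lambda>_. e)" "0\<^sub>m 1 n" n B] assms
    by simp
qed

lemma orthogonal_block_congruence:
  fixes U B :: "'a::comm_ring_1 mat"
  assumes U: "U \<in> carrier_mat n n" "transpose_mat U * U = 1\<^sub>m n" and B: "B \<in> carrier_mat n n"
    and X_def: "X = four_block_mat (1\<^sub>m 1) (0\<^sub>m 1 n) (0\<^sub>m n 1) U"
  shows "X \<in> carrier_mat (Suc n) (Suc n)" and "transpose_mat X * X = 1\<^sub>m (Suc n)"
    and "transpose_mat X * four_block_mat (mat 1 1 (\<lambda>_. e)) (0\<^sub>m 1 n) (0\<^sub>m n 1) B * X =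
      four_block_mat (mat 1 1 (\<lambda>_. e)) (0\<^sub>m 1 n) (0\<^sub>m n 1) (transpose_mat U * B * U)"
proof -
  have Xt: "transpose_mat X = four_block_mat (1\<^sub>m 1) (0\<^sub>m 1 n) (0\<^sub>m n 1) (transpose_mat U)"
    unfolding X_def using U by (subst transpose_four_block_mat) auto
  show "X \<in> carrier_mat (Suc n) (Suc n)" unfolding X_def using U by auto
  show "transpose_mat X * X = 1\<^sub>m (Suc n)"
    unfolding Xt unfolding X_def using U by (subst mult_four_block_mat) auto
  show "transpose_mat X * four_block_mat (mat 1 1 (\<lambda>_. e)) (0\<^sub>m 1 n) (0\<^sub>m n 1) B * X =
      four_block_mat (mat 1 1 (\<lambda>_. e)) (0\<^sub>m 1 n) (0\<^sub>m n 1) (transpose_mat U * B * U)"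
  proof -
    have X: "X \<in> carrier_mat (Suc n) (Suc n)" unfolding X_def using U by auto
    have "transpose_mat X * four_block_mat (mat 1 1 (\<lambda>_. e)) (0\<^sub>m 1 n) (0\<^sub>m n 1) B * X =
        transpose_mat X * (four_block_mat (mat 1 1 (\<lambda>_. e)) (0\<^sub>m 1 n) (0\<^sub>m n 1) B * X)"
      using X B by (intro assoc_mult_mat[of _ "Suc n" "Suc n" _ "Suc n" _ "Suc n"]) auto
    also have "four_block_mat (mat 1 1 (\<lambda>_. e)) (0\<^sub>m 1 n) (0\<^sub>m n 1) B * X =
        four_block_mat (mat 1 1 (\<lambda>_. e)) (0\<^sub>m 1 n) (0\<^sub>m n 1) (B * U)"
      unfolding X_def using U B by (subst mult_four_block_mat) auto
    also have "transpose_mat X * four_block_mat (mat 1 1 (\<lambda>_. e)) (0\<^sub>m 1 n) (0\<^sub>m n 1) (B * U) =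
        four_block_mat (mat 1 1 (\<lambda>_. e)) (0\<^sub>m 1 n) (0\<^sub>m n 1) (transpose_mat U * (B * U))"
      unfolding Xt using U B by (subst mult_four_block_mat) auto
    also have "transpose_mat U * (B * U) = transpose_mat U * B * U" using U B by simp
    finally show ?thesis .
  qed
qed

lemma four_block_mat_diag:
  "four_block_mat (mat 1 1 (\<lambda>_. e)) (0\<^sub>m 1 n) (0\<^sub>m n 1) (mat_diag n (\<lambda>i. es ! i)) =
    mat_diag (Suc n) (\<lambda>i. (e # es) ! i)"
proof (rule eq_matI)
  fix i j assume "i < dim_row (mat_diag (Suc n) (\<lambda>i. (e # es) ! i))"
    "j < dim_col (mat_diag (Suc n) (\<lambda>i. (e # es) ! i))"
  thus "four_block_mat (mat 1 1 (\<lambda>_. e)) (0\<^sub>m 1 n) (0\<^sub>m n 1) (mat_diag n (\<lambda>i. es ! i)) $$ (i, j)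
      = mat_diag (Suc n) (\<lambda>i. (e # es) ! i) $$ (i, j)"
    by (cases i; cases j) (auto simp: mat_diag_def)
qed (auto simp: mat_diag_def)

lemma length_eigenvalues:
  fixes A :: "'a::comm_ring_1 mat"
  assumes "A \<in> carrier_mat n n" "char_poly A = (\<Prod>e\<leftarrow>es. [:- e, 1:])"
  shows "length es = n"
  using degree_monic_char_poly[OF assms(1)] degree_linear_factors[of uminus es] assms(2) by simp

theorem real_symmetric_orthogonal_diagonalization:
  fixes A :: "real mat"
  assumes "A \<in> carrier_mat n n" "transpose_mat A = A" "char_poly A = (\<Prod>e\<leftarrow>es. [:- e, 1:])"
  shows "\<exists>U \<in> carrier_mat n n. transpose_mat U * U = 1\<^sub>m n \<and>
    transpose_mat U * A * U = mat_diag n (\<lambda>i. es ! i)"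
  using assms
proof (induction es arbitrary: n A)
  case Nil
  hence "n = 0" using length_eigenvalues[OF Nil(1,3)] by simp
  thus ?case by (intro bexI[of _ "1\<^sub>m 0"]) (auto simp: mat_diag_def)
next
  case (Cons e es n A)
  note A = Cons.prems
  obtain n1 where n: "n = Suc n1" using length_eigenvalues[OF A(1,3)] by auto
  have "eigenvalue A e" unfolding eigenvalue_root_char_poly[OF A(1)] A(3) by simp
  then obtain v where v: "v \<in> carrier_vec n" "v \<bullet> v = 1" "A *\<^sub>v v = e \<cdot>\<^sub>v v"
    using unit_eigenvector_exists[OF A(1)] by blast
  obtain W where W: "W \<in> carrier_mat n n" "transpose_mat W * W = 1\<^sub>m n" "col W 0 = v"
    using orthogonal_mat_extending_unit_vector[OF v(1,2)] by blast
  obtain B where B: "B \<in> carrier_mat n1 n1" "transpose_mat B = B"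
    and AW: "transpose_mat W * A * W = four_block_mat (mat 1 1 (\<lambda>_. e)) (0\<^sub>m 1 n1) (0\<^sub>m n1 1) B"
    using orthogonal_congruence_eigenvector_block[of A n1 W e] A W v unfolding n by blast
  have "[:- e, 1:] * char_poly B = [:- e, 1:] * (\<Prod>e\<leftarrow>es. [:- e, 1:])"
    using char_poly_similar[OF orthogonal_congruence_similar[OF A(1) W(1,2)]] A(3)
    unfolding AW char_poly_eigen_block[OF B(1)] by simp
  hence "char_poly B = (\<Prod>e\<leftarrow>es. [:- e, 1:])"
    by (metis mult_cancel_left pCons_eq_0_iff zero_neq_one)
  then obtain U' where U': "U' \<in> carrier_mat n1 n1" "transpose_mat U' * U' = 1\<^sub>m n1"
    and diag: "transpose_mat U' * B * U' = mat_diag n1 (\<lambda>i. es ! i)"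
    using Cons.IH[OF B(1,2)] by blast
  define X where "X = four_block_mat (1\<^sub>m 1) (0\<^sub>m 1 n1) (0\<^sub>m n1 1) U'"
  note X = orthogonal_block_congruence[OF U' B(1) X_def, folded n]
  show ?case
  proof (intro bexI conjI)
    show "W * X \<in> carrier_mat n n" using W X by simp
    show "transpose_mat (W * X) * (W * X) = 1\<^sub>m n" by (rule orthogonal_mult[OF W(1,2) X(1,2)])
    have "transpose_mat (W * X) * A * (W * X) =
        four_block_mat (mat 1 1 (\<lambda>_. e)) (0\<^sub>m 1 n1) (0\<^sub>m n1 1) (mat_diag n1 (\<lambda>i. es ! i))"
      unfolding congruence_mult[OF A(1) W(1) X(1)] AW X(3) diag ..
    also have "\<dots> = mat_diag n (\<lambda>i. (e # es) ! i)" unfolding n by (rule four_block_mat_diag)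
    finally show "transpose_mat (W * X) * A * (W * X) = mat_diag n (\<lambda>i. (e # es) ! i)" .
  qed
qed

corollary real_symmetric_spectral_entries:
  fixes A :: "real mat"
  assumes "A \<in> carrier_mat n n" "transpose_mat A = A" "char_poly A = (\<Prod>e\<leftarrow>es. [:- e, 1:])"
  obtains u :: "nat \<Rightarrow> nat \<Rightarrow> real"
  where "\<And>a b. a < n \<Longrightarrow> b < n \<Longrightarrow> A $$ (a, b) = (\<Sum>c<n. u a c * es ! c * u b c)"
    and "\<And>c. c < n \<Longrightarrow> (\<Sum>a<n. (u a c)\<^sup>2) = 1"
    and "\<And>a b. a < n \<Longrightarrow> b < n \<Longrightarrow> (\<Sum>c<n. u a c * u b c) = (if a = b then 1 else 0)"
proof -
  obtain U where U: "U \<in> carrier_mat n n" "transpose_mat U * U = 1\<^sub>m n"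
    and diag: "transpose_mat U * A * U = mat_diag n (\<lambda>i. es ! i)"
    using real_symmetric_orthogonal_diagonalization[OF assms] by blast
  have UUt: "U * transpose_mat U = 1\<^sub>m n"
    using mat_mult_left_right_inverse[of "transpose_mat U" n U] U by simp
  have "U * (transpose_mat U * A * U) * transpose_mat U = (U * transpose_mat U) * A * (U * transpose_mat U)"
    using U assms(1) by (simp add: assoc_mult_mat[of _ n n _ n _ n])
  hence "A = U * mat_diag n (\<lambda>i. es ! i) * transpose_mat U"
    using UUt assms(1) unfolding diag by simp
  also have "\<dots> = mat n n (\<lambda>(a, c). U $$ (a, c) * es ! c) * transpose_mat U"
    using U by (simp add: mat_diag_mult_right)
  finally have A: "A = mat n n (\<lambda>(a, c). U $$ (a, c) * es ! c) * transpose_mat U" .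
  show thesis
  proof
    fix a b assume "a < n" "b < n"
    thus "A $$ (a, b) = (\<Sum>c<n. U $$ (a, c) * es ! c * U $$ (b, c))"
      unfolding A using U by (simp add: scalar_prod_def atLeast0LessThan)
  next
    fix c assume "c < n"
    thus "(\<Sum>a<n. (U $$ (a, c))\<^sup>2) = 1"
      using arg_cong[OF U(2), of "\<lambda>B. B $$ (c, c)"] U(1)
      by (simp add: scalar_prod_def atLeast0LessThan power2_eq_square)
  next
    fix a b assume "a < n" "b < n"
    thus "(\<Sum>c<n. U $$ (a, c) * U $$ (b, c)) = (if a = b then 1 else 0)"
      using arg_cong[OF UUt, of "\<lambda>B. B $$ (a, b)"] U(1)
      by (simp add: scalar_prod_def atLeast0LessThan)
  qed
qed

section \<open>A Ky Fan bound for disjoint indicator vectors\<close>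

lemma square_sum_le_card_mult_sum_squares:
  fixes f :: "'a \<Rightarrow> real"
  shows "(\<Sum>a\<in>V. f a)\<^sup>2 \<le> real (card V) * (\<Sum>a\<in>V. (f a)\<^sup>2)"
proof (cases "finite V")
  case True
  have "0 \<le> (\<Sum>a\<in>V. \<Sum>b\<in>V. (f a - f b)\<^sup>2)" by (intro sum_nonneg) auto
  also have "\<dots> = 2 * real (card V) * (\<Sum>a\<in>V. (f a)\<^sup>2) - 2 * (\<Sum>a\<in>V. f a)\<^sup>2"
    by (simp add: power2_diff sum_subtractf sum.distrib sum_distrib_left sum_distrib_right
        power2_eq_square algebra_simps)
  finally show ?thesis by simp
qed simp

lemma sorted_weighted_sum_lower_bound:
  fixes ls :: "real list" and w :: "nat \<Rightarrow> real"
  assumes ls: "sorted ls" "length ls = n" and k: "0 < k" "k \<le> n"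
    and w: "\<And>c. c < n \<Longrightarrow> 0 \<le> w c" "\<And>c. c < n \<Longrightarrow> w c \<le> m"
    and total: "(\<Sum>c<n. w c) = real k * m"
  shows "m * (\<Sum>c<k. ls ! c) \<le> (\<Sum>c<n. ls ! c * w c)"
proof -
  \<comment> \<open>Bathtub argument around \<open>t\<close>: on the first \<open>k\<close> indices the weights fall short of \<open>m\<close>
      by exactly the mass they put on the remaining indices, where the entries are at least \<open>t\<close>.\<close>
  define t where "t = ls ! (k - 1)"
  have split: "(\<Sum>c<n. g c) = (\<Sum>c<k. g c) + (\<Sum>c\<in>{k..<n}. g c)" for g :: "nat \<Rightarrow> real"
    using k by (metis atLeast0LessThan sum.atLeastLessThan_concat zero_le)
  have low: "t * (w c - m) \<le> ls ! c * (w c - m)" if "c < k" for c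
  proof -
    have "ls ! c \<le> t" unfolding t_def using ls k that by (intro sorted_nth_mono) auto
    thus ?thesis using w(2)[of c] that k by (simp add: mult_right_mono_neg)
  qed
  have high: "t * w c \<le> ls ! c * w c" if "k \<le> c" "c < n" for c
  proof -
    have "t \<le> ls ! c" unfolding t_def using ls k that by (intro sorted_nth_mono) auto
    thus ?thesis using w(1)[of c] that by (simp add: mult_right_mono)
  qed
  have "0 = t * ((\<Sum>c<n. w c) - k * m)" using total by simp
  also have "\<dots> = (\<Sum>c<k. t * (w c - m)) + (\<Sum>c\<in>{k..<n}. t * w c)"
    by (simp add: split[of w] sum_distrib_left[symmetric] sum_subtractf algebra_simps)
  also have "\<dots> \<le> (\<Sum>c<k. ls ! c * (w c - m)) + (\<Sum>c\<in>{k..<n}. ls ! c * w c)"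
    using low high by (intro add_mono sum_mono) auto
  also have "\<dots> = (\<Sum>c<n. ls ! c * w c) - m * (\<Sum>c<k. ls ! c)"
    using split[of "\<lambda>c. ls ! c * w c"] by (simp add: sum_subtractf sum_distrib_left algebra_simps)
  finally show ?thesis by simp
qed

lemma spectral_quadratic_form:
  fixes u L :: "nat \<Rightarrow> nat \<Rightarrow> real"
  assumes L: "\<And>a b. a < n \<Longrightarrow> b < n \<Longrightarrow> L a b = (\<Sum>c<n. u a c * ls ! c * u b c)"
    and V: "V \<subseteq> {..<n}"
  shows "(\<Sum>a\<in>V. \<Sum>b\<in>V. L a b) = (\<Sum>c<n. ls ! c * (\<Sum>a\<in>V. u a c)\<^sup>2)"
proof -
  have "(\<Sum>a\<in>V. \<Sum>b\<in>V. L a b) = (\<Sum>a\<in>V. \<Sum>b\<in>V. \<Sum>c<n. u a c * ls ! c * u b c)"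
    using V by (intro sum.cong refl L) auto
  also have "\<dots> = (\<Sum>c<n. \<Sum>a\<in>V. \<Sum>b\<in>V. u a c * ls ! c * u b c)"
    by (subst sum.swap, subst (2) sum.swap, simp)
  also have "\<dots> = (\<Sum>c<n. ls ! c * (\<Sum>a\<in>V. u a c)\<^sup>2)"
    by (simp add: power2_eq_square sum_distrib_left sum_distrib_right algebra_simps)
  finally show ?thesis .
qed

lemma sum_squared_projections_le:
  fixes u :: "nat \<Rightarrow> nat \<Rightarrow> real" and V :: "nat \<Rightarrow> nat set"
  assumes col: "(\<Sum>a<n. (u a c)\<^sup>2) = 1"
    and V: "\<And>i. i < k \<Longrightarrow> V i \<subseteq> {..<n}" "\<And>i. i < k \<Longrightarrow> card (V i) = m"
    and disj: "disjoint_family_on V {..<k}"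
  shows "(\<Sum>i<k. (\<Sum>a\<in>V i. u a c)\<^sup>2) \<le> real m"
proof -
  have fin: "finite (V i)" if "i < k" for i using V(1)[OF that] finite_subset by blast
  have "(\<Sum>i<k. (\<Sum>a\<in>V i. u a c)\<^sup>2) \<le> (\<Sum>i<k. real m * (\<Sum>a\<in>V i. (u a c)\<^sup>2))"
  proof (intro sum_mono)
    fix i assume "i \<in> {..<k}"
    thus "(\<Sum>a\<in>V i. u a c)\<^sup>2 \<le> real m * (\<Sum>a\<in>V i. (u a c)\<^sup>2)"
      using square_sum_le_card_mult_sum_squares[of "\<lambda>a. u a c" "V i"] V(2)[of i] by simp
  qed
  also have "\<dots> = real m * (\<Sum>a\<in>(\<Union>i<k. V i). (u a c)\<^sup>2)"
    using fin disj by (subst sum.UNION_disjoint_family) (auto simp: sum_distrib_left)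
  also have "\<dots> \<le> real m * (\<Sum>a<n. (u a c)\<^sup>2)"
    using V(1) by (intro mult_left_mono sum_mono2) auto
  finally show ?thesis using col by simp
qed

lemma sum_squared_projections_total:
  fixes u :: "nat \<Rightarrow> nat \<Rightarrow> real" and V :: "nat \<Rightarrow> nat set"
  assumes rows: "\<And>a b. a < n \<Longrightarrow> b < n \<Longrightarrow> (\<Sum>c<n. u a c * u b c) = (if a = b then 1 else 0)"
    and V: "\<And>i. i < k \<Longrightarrow> V i \<subseteq> {..<n}" "\<And>i. i < k \<Longrightarrow> card (V i) = m"
  shows "(\<Sum>c<n. \<Sum>i<k. (\<Sum>a\<in>V i. u a c)\<^sup>2) = real k * real m"
proof -
  have "(\<Sum>c<n. \<Sum>i<k. (\<Sum>a\<in>V i. u a c)\<^sup>2) = (\<Sum>i<k. \<Sum>a\<in>V i. \<Sum>b\<in>V i. \<Sum>c<n. u a c * u b c)"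
    unfolding power2_eq_square sum_product
    by (subst sum.swap) (simp add: sum.swap[of _ "{..<n}"])
  also have "\<dots> = (\<Sum>i<k. \<Sum>a\<in>V i. \<Sum>b\<in>V i. if a = b then 1 else 0)"
    using V(1) by (intro sum.cong refl rows) auto
  also have "\<dots> = (\<Sum>i<k. real m)"
    using V finite_subset[OF V(1)] by (intro sum.cong refl) auto
  finally show ?thesis by simp
qed

lemma ky_fan_disjoint_blocks:
  fixes u L :: "nat \<Rightarrow> nat \<Rightarrow> real" and V :: "nat \<Rightarrow> nat set"
  assumes L: "\<And>a b. a < n \<Longrightarrow> b < n \<Longrightarrow> L a b = (\<Sum>c<n. u a c * ls ! c * u b c)"
    and cols: "\<And>c. c < n \<Longrightarrow> (\<Sum>a<n. (u a c)\<^sup>2) = 1"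
    and rows: "\<And>a b. a < n \<Longrightarrow> b < n \<Longrightarrow> (\<Sum>c<n. u a c * u b c) = (if a = b then 1 else 0)"
    and ls: "sorted ls" "length ls = n" and k: "0 < k" "k \<le> n"
    and V: "\<And>i. i < k \<Longrightarrow> V i \<subseteq> {..<n}" "\<And>i. i < k \<Longrightarrow> card (V i) = m"
    and disj: "disjoint_family_on V {..<k}"
  shows "real m * (\<Sum>c<k. ls ! c) \<le> (\<Sum>i<k. \<Sum>a\<in>V i. \<Sum>b\<in>V i. L a b)"
proof -
  \<comment> \<open>\<open>w c\<close> is the squared norm of the projection of the \<open>k\<close> indicator vectors onto the
      \<open>c\<close>-th eigenvector.\<close>
  define w where "w c = (\<Sum>i<k. (\<Sum>a\<in>V i. u a c)\<^sup>2)" for c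
  have "(\<Sum>i<k. \<Sum>a\<in>V i. \<Sum>b\<in>V i. L a b) = (\<Sum>c<n. ls ! c * w c)"
    using V(1) by (simp add: spectral_quadratic_form[OF L] w_def sum_distrib_left, subst sum.swap, simp)
  moreover have "0 \<le> w c" for c unfolding w_def by (intro sum_nonneg) auto
  moreover have "w c \<le> real m" if "c < n" for c
    unfolding w_def
    using sum_squared_projections_le[where u = u and V = V and k = k, OF cols[OF that] V disj] .
  moreover have "(\<Sum>c<n. w c) = real k * real m"
    unfolding w_def
    using sum_squared_projections_total[where u = u and V = V and k = k, OF rows V] .
  ultimately show ?thesis using sorted_weighted_sum_lower_bound[OF ls k] by simp
qed

section \<open>Cuts in the Laplacian of a computation graph\<close>

definition out_boundary :: "('a \<times> 'a) set \<Rightarrow> 'a set \<Rightarrow> 'a set" where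
  "out_boundary E V = {a \<in> V. \<exists>b. (a, b) \<in> E \<and> b \<notin> V}"

definition in_boundary :: "('a \<times> 'a) set \<Rightarrow> 'a set \<Rightarrow> 'a set" where
  "in_boundary E V = {b. b \<notin> V \<and> (\<exists>a\<in>V. (b, a) \<in> E)}"

lemma lap_weight_commute: "lap_weight E a b = lap_weight E b a"
  unfolding lap_weight_def by simp

lemma laplacian_carrier [simp]: "laplacian n E \<in> carrier_mat n n"
  unfolding laplacian_def by simp

lemma transpose_laplacian: "transpose_mat (laplacian n E) = laplacian n E"
  by (rule eq_matI) (auto simp: laplacian_def lap_weight_commute)

lemma laplacian_index:
  "a < n \<Longrightarrow> b < n \<Longrightarrow>
    laplacian n E $$ (a, b) = (if a = b then (\<Sum>w<n. lap_weight E a w) else 0) - lap_weight E a b"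
  unfolding laplacian_def by simp

lemma laplacian_indicator_form:
  assumes "V \<subseteq> {..<n}"
  shows "(\<Sum>a\<in>V. \<Sum>b\<in>V. laplacian n E $$ (a, b)) = (\<Sum>a\<in>V. \<Sum>w\<in>{..<n} - V. lap_weight E a w)"
proof (rule sum.cong[OF refl])
  fix a assume a: "a \<in> V"
  have fin: "finite V" using assms finite_subset by blast
  have "(\<Sum>b\<in>V. laplacian n E $$ (a, b)) = (\<Sum>w<n. lap_weight E a w) - (\<Sum>b\<in>V. lap_weight E a b)"
    using a assms fin by (simp add: laplacian_index subset_iff sum_subtractf)
  also have "(\<Sum>w<n. lap_weight E a w) = (\<Sum>w\<in>{..<n} - V. lap_weight E a w) + (\<Sum>b\<in>V. lap_weight E a b)"
    using assms by (subst sum.subset_diff[of V "{..<n}"]) auto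
  finally show "(\<Sum>b\<in>V. laplacian n E $$ (a, b)) = (\<Sum>w\<in>{..<n} - V. lap_weight E a w)" by simp
qed

lemma sum_inverse_degree_le_card:
  fixes R :: "'a \<Rightarrow> 'b \<Rightarrow> bool" and d :: "'a \<Rightarrow> nat"
  assumes "finite B" and deg: "\<And>x. x \<in> A \<Longrightarrow> card {y\<in>B. R x y} \<le> d x"
  shows "(\<Sum>x\<in>A. \<Sum>y\<in>B. if R x y then 1 / real (d x) else 0) \<le> real (card {x\<in>A. \<exists>y\<in>B. R x y})"
proof (cases "finite A")
  case True
  have "(\<Sum>y\<in>B. if R x y then 1 / real (d x) else 0) \<le> (if \<exists>y\<in>B. R x y then 1 else 0)"
    if x: "x \<in> A" for x
  proof -
    have "(\<Sum>y\<in>B. if R x y then 1 / real (d x) else 0) = real (card {y\<in>B. R x y}) / real (d x)"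
      using sum.inter_filter[OF \<open>finite B\<close>, of "\<lambda>_. 1 / real (d x)" "R x"] by simp
    moreover have "{y\<in>B. R x y} = {}" if "\<not> (\<exists>y\<in>B. R x y)" using that by auto
    ultimately show ?thesis using deg[OF x] by (auto simp: divide_le_eq_1)
  qed
  hence "(\<Sum>x\<in>A. \<Sum>y\<in>B. if R x y then 1 / real (d x) else 0) \<le> (\<Sum>x\<in>A. if \<exists>y\<in>B. R x y then 1 else 0)"
    by (rule sum_mono)
  also have "\<dots> = real (card {x\<in>A. \<exists>y\<in>B. R x y})"
    using sum.inter_filter[OF True, of "\<lambda>_. 1::real" "\<lambda>x. \<exists>y\<in>B. R x y"] by simp
  finally show ?thesis .
qed simp

lemma laplacian_indicator_form_le_boundary:
  assumes E: "E \<subseteq> {0..<n} \<times> {0..<n}" and V: "V \<subseteq> {..<n}"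
  shows "(\<Sum>a\<in>V. \<Sum>b\<in>V. laplacian n E $$ (a, b)) \<le>
    real (card (out_boundary E V) + card (in_boundary E V))"
proof -
  define W where "W = {..<n} - V"
  have succ_lt: "b < n" if "(a, b) \<in> E" for a b using E that by auto
  have deg: "card {y\<in>B. (x, y) \<in> E} \<le> out_deg E x" for x B
  proof -
    have "{y. (x, y) \<in> E} \<subseteq> {..<n}" using succ_lt by auto
    hence "finite {y. (x, y) \<in> E}" by (rule finite_subset) simp
    thus ?thesis unfolding out_deg_def by (rule card_mono) auto
  qed
  have "(\<Sum>a\<in>V. \<Sum>b\<in>V. laplacian n E $$ (a, b)) =
      (\<Sum>a\<in>V. \<Sum>w\<in>W. if (a, w) \<in> E then 1 / real (out_deg E a) else 0) +
      (\<Sum>w\<in>W. \<Sum>a\<in>V. if (w, a) \<in> E then 1 / real (out_deg E w) else 0)"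
    unfolding laplacian_indicator_form[OF V] W_def[symmetric] lap_weight_def
    by (simp add: sum.distrib sum.swap[of _ W])
  also have "\<dots> \<le> real (card {a\<in>V. \<exists>w\<in>W. (a, w) \<in> E}) + real (card {w\<in>W. \<exists>a\<in>V. (w, a) \<in> E})"
    using V finite_subset by (intro add_mono sum_inverse_degree_le_card deg) (auto simp: W_def)
  also have "{a\<in>V. \<exists>w\<in>W. (a, w) \<in> E} = out_boundary E V"
    unfolding out_boundary_def W_def using succ_lt by blast
  also have "{w\<in>W. \<exists>a\<in>V. (w, a) \<in> E} = in_boundary E V"
    using E unfolding in_boundary_def W_def by auto
  finally show ?thesis by simp
qed

lemma mult_le_of_disjoint_blocks:
  assumes disj: "disjoint_family_on V {..<k}"
    and V: "\<And>i. i < k \<Longrightarrow> V i \<subseteq> {..<n}" "\<And>i. i < k \<Longrightarrow> card (V i) = m"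
  shows "k * m \<le> n"
proof -
  have "k * m = card (\<Union>i<k. V i)"
    using V finite_subset[OF V(1)] by (subst card_UN_disjoint'[OF disj]) auto
  also have "\<dots> \<le> card {..<n}" using V(1) by (intro card_mono) auto
  finally show ?thesis by simp
qed

lemma laplacian_eigenvalue_sum_le_boundaries:
  assumes E: "E \<subseteq> {0..<n} \<times> {0..<n}" and ls: "sorted_eigenvalues (laplacian n E) ls"
    and k: "0 < k"
    and V: "\<And>i. i < k \<Longrightarrow> V i \<subseteq> {..<n}" "\<And>i. i < k \<Longrightarrow> card (V i) = m"
    and disj: "disjoint_family_on V {..<k}"
  shows "real m * (\<Sum>i<k. ls ! i) \<le>
    (\<Sum>i<k. real (card (out_boundary E (V i)) + card (in_boundary E (V i))))"
proof (cases "m = 0")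
  case True
  thus ?thesis by (simp add: sum_nonneg)
next
  case False
  hence "k \<le> k * m" by simp
  hence "k \<le> n" using mult_le_of_disjoint_blocks[OF disj V] by linarith
  have sorted: "sorted ls" and cp: "char_poly (laplacian n E) = (\<Prod>a\<leftarrow>ls. [:- a, 1:])"
    using ls unfolding sorted_eigenvalues_def by auto
  obtain u where "\<And>a b. a < n \<Longrightarrow> b < n \<Longrightarrow> laplacian n E $$ (a, b) = (\<Sum>c<n. u a c * ls ! c * u b c)"
    and "\<And>c. c < n \<Longrightarrow> (\<Sum>a<n. (u a c)\<^sup>2) = 1"
    and "\<And>a b. a < n \<Longrightarrow> b < n \<Longrightarrow> (\<Sum>c<n. u a c * u b c) = (if a = b then 1 else 0)"
    using real_symmetric_spectral_entries[OF laplacian_carrier transpose_laplacian cp] by blast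
  from ky_fan_disjoint_blocks[OF this sorted length_eigenvalues[OF laplacian_carrier cp] k \<open>k \<le> n\<close> V disj]
  have "real m * (\<Sum>i<k. ls ! i) \<le> (\<Sum>i<k. \<Sum>a\<in>V i. \<Sum>b\<in>V i. laplacian n E $$ (a, b))" .
  also have "\<dots> \<le> (\<Sum>i<k. real (card (out_boundary E (V i)) + card (in_boundary E (V i))))"
    using V(1) by (intro sum_mono laplacian_indicator_form_le_boundary[OF E]) auto
  finally show ?thesis .
qed

section \<open>Runs of a parallel schedule\<close>

lemma exec_append:
  "exec n E p M (xs @ ys) st =
    (case exec n E p M xs st of None \<Rightarrow> None | Some st' \<Rightarrow> exec n E p M ys st')"
  by (induction xs arbitrary: st) (auto split: option.splits)

fun move_vertex :: "move \<Rightarrow> nat" where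
  "move_vertex (Compute _ v) = v"
| "move_vertex (Evict _ v) = v"
| "move_vertex (Store _ v) = v"
| "move_vertex (Load _ v) = v"
| "move_vertex (Send _ _ v) = v"

fun writes_out :: "nat \<Rightarrow> move \<Rightarrow> bool" where
  "writes_out j (Store i _) = (i = j)"
| "writes_out j (Send i _ _) = (i = j)"
| "writes_out j _ = False"

fun reads_in :: "nat \<Rightarrow> move \<Rightarrow> bool" where
  "reads_in j (Load i _) = (i = j)"
| "reads_in j (Send _ i _) = (i = j)"
| "reads_in j _ = False"

lemma writes_out_reads_in_le_move_io:
  "of_bool (writes_out j m) + of_bool (reads_in j m) \<le> move_io j m"
  by (cases m) auto

definition evaluated_in :: "move list \<Rightarrow> nat \<Rightarrow> nat \<Rightarrow> nat \<Rightarrow> nat set" where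
  "evaluated_in ms j \<alpha> \<beta> = {v. \<exists>t. \<alpha> \<le> t \<and> t < \<beta> \<and> ms ! t = Compute j v}"

definition written_in :: "move list \<Rightarrow> nat \<Rightarrow> nat \<Rightarrow> nat \<Rightarrow> nat set" where
  "written_in ms j \<alpha> \<beta> = (\<lambda>t. move_vertex (ms ! t)) ` {t \<in> {\<alpha>..<\<beta>}. writes_out j (ms ! t)}"

definition read_in :: "move list \<Rightarrow> nat \<Rightarrow> nat \<Rightarrow> nat \<Rightarrow> nat set" where
  "read_in ms j \<alpha> \<beta> = (\<lambda>t. move_vertex (ms ! t)) ` {t \<in> {\<alpha>..<\<beta>}. reads_in j (ms ! t)}"

definition evaluations :: "move list \<Rightarrow> nat \<Rightarrow> nat \<Rightarrow> nat" where
  "evaluations ms j t = card {s. s < t \<and> (\<exists>v. ms ! s = Compute j v)}"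

lemma card_written_in_read_in_le:
  "card (written_in ms j \<alpha> \<beta>) + card (read_in ms j \<alpha> \<beta>) \<le> (\<Sum>t\<in>{\<alpha>..<\<beta>}. move_io j (ms ! t))"
proof -
  have card_filter: "card {t \<in> {\<alpha>..<\<beta>}. P t} = (\<Sum>t\<in>{\<alpha>..<\<beta>}. of_bool (P t))" for P
    using sum_of_bool_eq[of "{\<alpha>..<\<beta>}" P] by (simp add: Int_def)
  have "card (written_in ms j \<alpha> \<beta>) + card (read_in ms j \<alpha> \<beta>) \<le>
      card {t \<in> {\<alpha>..<\<beta>}. writes_out j (ms ! t)} + card {t \<in> {\<alpha>..<\<beta>}. reads_in j (ms ! t)}"
    unfolding written_in_def read_in_def by (intro add_mono card_image_le) auto
  also have "\<dots> = (\<Sum>t\<in>{\<alpha>..<\<beta>}. of_bool (writes_out j (ms ! t)) + of_bool (reads_in j (ms ! t)))"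
    unfolding card_filter by (simp add: sum.distrib)
  also have "\<dots> \<le> (\<Sum>t\<in>{\<alpha>..<\<beta>}. move_io j (ms ! t))"
    by (intro sum_mono writes_out_reads_in_le_move_io)
  finally show ?thesis .
qed

lemma evaluations_0 [simp]: "evaluations ms j 0 = 0"
  unfolding evaluations_def by simp

lemma evaluations_Suc_le: "evaluations ms j (Suc t) \<le> Suc (evaluations ms j t)"
proof -
  let ?A = "{s. s < t \<and> (\<exists>v. ms ! s = Compute j v)}"
  have "evaluations ms j (Suc t) \<le> card (insert t ?A)"
    unfolding evaluations_def by (intro card_mono) auto
  also have "\<dots> \<le> Suc (card ?A)" by (simp add: card_insert_if)
  finally show ?thesis unfolding evaluations_def .
qed

lemma Least_level_exact:
  fixes c :: "nat \<Rightarrow> nat"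
  assumes c0: "c 0 = 0" and cSuc: "\<And>t. c (Suc t) \<le> Suc (c t)" and x: "x \<le> c N"
  shows "(LEAST t. x \<le> c t) \<le> N" and "c (LEAST t. x \<le> c t) = x"
proof -
  let ?a = "LEAST t. x \<le> c t"
  show "?a \<le> N" using x by (rule Least_le)
  have "x \<le> c ?a" using x by (rule LeastI)
  moreover have "c ?a \<le> x"
  proof (cases ?a)
    case (Suc t)
    hence "\<not> x \<le> c t" by (metis lessI not_less_Least)
    thus ?thesis using cSuc[of t] Suc by simp
  qed (simp add: c0)
  ultimately show "c ?a = x" by simp
qed

lemma sum_consecutive_intervals:
  fixes f :: "nat \<Rightarrow> 'b::comm_monoid_add"
  assumes "\<And>i i'. i \<le> i' \<Longrightarrow> i' \<le> k \<Longrightarrow> a i \<le> a i'"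
  shows "(\<Sum>i<k. \<Sum>t\<in>{a i..<a (Suc i)}. f t) = (\<Sum>t\<in>{a 0..<a k}. f t)"
  using assms
proof (induction k)
  case (Suc k)
  have "a 0 \<le> a k" "a k \<le> a (Suc k)" using Suc.prems by auto
  thus ?case using Suc by (simp add: sum.atLeastLessThan_concat)
qed simp

lemma exists_ge_average:
  fixes f :: "nat \<Rightarrow> nat"
  assumes "0 < p" "(\<Sum>j<p. f j) = n"
  shows "\<exists>j<p. n \<le> p * f j"
proof (rule ccontr)
  assume "\<not> ?thesis"
  hence "(\<Sum>j<p. p * f j) < (\<Sum>j<p. n)"
    using assms(1) by (intro sum_strict_mono) auto
  thus False using assms(2) by (simp add: sum_distrib_left[symmetric])
qed

lemma proc_io_eq_sum: "proc_io j ms = (\<Sum>t<length ms. move_io j (ms ! t))"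
  unfolding proc_io_def by (simp add: sum_list_sum_nth atLeast0LessThan)

(* R t j, S t and C t are the fast memory of processor j, the slow memory and the set of
   evaluated vertices after the first t moves of ms. *)
locale par_run =
  fixes n :: nat and E :: "(nat \<times> nat) set" and p M :: nat and ms :: "move list"
    and R :: "nat \<Rightarrow> nat \<Rightarrow> nat set" and S :: "nat \<Rightarrow> nat set" and C :: "nat \<Rightarrow> nat set"
  assumes init: "R 0 = (\<lambda>_. {})" "S 0 = {}" "C 0 = {}"
    and run_step: "\<And>t. t < length ms \<Longrightarrow>
      step n E p M (ms ! t) (R t, S t, C t) = Some (R (Suc t), S (Suc t), C (Suc t))"

lemma valid_par_schedule_run:
  assumes "valid_par_schedule n E p M ms"
  obtains R S C where "par_run n E p M ms R S C" and "C (length ms) = {0..<n}"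
proof -
  define init :: pstate where "init = (\<lambda>_. {}, {}, {})"
  obtain R S where ex: "exec n E p M ms init = Some (R, S, {0..<n})"
    using assms unfolding valid_par_schedule_def init_def by auto
  define st where "st t = the (exec n E p M (take t ms) init)" for t
  have exs: "exec n E p M (take t ms) init = Some (st t)" for t
    using ex exec_append[of n E p M "take t ms" "drop t ms" init]
    unfolding st_def by (auto split: option.splits)
  have "par_run n E p M ms (\<lambda>t. fst (st t)) (\<lambda>t. fst (snd (st t))) (\<lambda>t. snd (snd (st t)))"
  proof
    have "st 0 = init" using exs[of 0] by simp
    thus "(\<lambda>t. fst (st t)) 0 = (\<lambda>_. {})" "(\<lambda>t. fst (snd (st t))) 0 = {}" "(\<lambda>t. snd (snd (st t))) 0 = {}"
      by (simp_all add: init_def)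
  next
    fix t assume "t < length ms"
    hence "take (Suc t) ms = take t ms @ [ms ! t]" by (simp add: take_Suc_conv_app_nth)
    hence "step n E p M (ms ! t) (st t) = Some (st (Suc t))"
      using exs[of t] exs[of "Suc t"] exec_append[of n E p M "take t ms" "[ms ! t]" init]
      by (simp split: option.splits)
    thus "step n E p M (ms ! t) (fst (st t), fst (snd (st t)), snd (snd (st t))) =
        Some (fst (st (Suc t)), fst (snd (st (Suc t))), snd (snd (st (Suc t))))" by simp
  qed
  moreover have "st (length ms) = (R, S, {0..<n})" using exs[of "length ms"] ex by simp
  ultimately show thesis using that by simp
qed

context par_run
begin

lemma move_enabled:
  assumes "t < length ms"
  shows "case ms ! t of
      Compute j v \<Rightarrow> j < p \<and> v < n \<and> v \<notin> C t \<and> (\<forall>u. (u, v) \<in> E \<longrightarrow> u \<in> R t j)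
        \<and> card (insert v (R t j)) \<le> M
    | Evict j v \<Rightarrow> True
    | Store j v \<Rightarrow> v \<in> R t j
    | Load j v \<Rightarrow> v \<in> S t \<and> card (insert v (R t j)) \<le> M
    | Send j j' v \<Rightarrow> j \<noteq> j' \<and> v \<in> R t j \<and> card (insert v (R t j')) \<le> M"
  using run_step[OF assms] by (cases "ms ! t") (auto split: if_splits)

lemma R_Suc:
  assumes "t < length ms"
  shows "R (Suc t) = (case ms ! t of
      Compute j v \<Rightarrow> (R t)(j := insert v (R t j))
    | Evict j v \<Rightarrow> (R t)(j := R t j - {v})
    | Store j v \<Rightarrow> R t
    | Load j v \<Rightarrow> (R t)(j := insert v (R t j))
    | Send j j' v \<Rightarrow> (R t)(j' := insert v (R t j')))"
  using run_step[OF assms] by (cases "ms ! t") (auto split: if_splits)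

lemma S_Suc:
  assumes "t < length ms"
  shows "S (Suc t) = (case ms ! t of Store j v \<Rightarrow> insert v (S t) | _ \<Rightarrow> S t)"
  using run_step[OF assms] by (cases "ms ! t") (auto split: if_splits)

lemma C_Suc:
  assumes "t < length ms"
  shows "C (Suc t) = (case ms ! t of Compute j v \<Rightarrow> insert v (C t) | _ \<Rightarrow> C t)"
  using run_step[OF assms] by (cases "ms ! t") (auto split: if_splits)

lemma memory_invariant:
  assumes "t \<le> length ms"
  shows "(\<forall>j. finite (R t j) \<and> card (R t j) \<le> M \<and> R t j \<subseteq> C t) \<and> S t \<subseteq> C t"
  using assms
proof (induction t)
  case 0
  show ?case using init by simp
next
  case (Suc t)
  hence t: "t < length ms" and IH: "\<And>j. finite (R t j)" "\<And>j. card (R t j) \<le> M"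
    "\<And>j. R t j \<subseteq> C t" "S t \<subseteq> C t" by auto
  show ?case
    using move_enabled[OF t] IH
    by (cases "ms ! t")
      (auto simp: R_Suc[OF t] S_Suc[OF t] C_Suc[OF t] intro: order_trans[OF card_Diff1_le])
qed

lemma fast_memory_finite: "t \<le> length ms \<Longrightarrow> finite (R t j)"
  using memory_invariant by blast

lemma card_fast_memory_le: "t \<le> length ms \<Longrightarrow> card (R t j) \<le> M"
  using memory_invariant by blast

lemma fast_memory_evaluated: "t \<le> length ms \<Longrightarrow> R t j \<subseteq> C t"
  using memory_invariant by blast

lemma slow_memory_evaluated: "t \<le> length ms \<Longrightarrow> S t \<subseteq> C t"
  using memory_invariant by blast

lemma evaluated_mono: "t \<le> t' \<Longrightarrow> t' \<le> length ms \<Longrightarrow> C t \<subseteq> C t'"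
proof (induction t' rule: dec_induct)
  case (step t')
  thus ?case using C_Suc[of t'] by (cases "ms ! t'") auto
qed simp

lemma evaluated_has_Compute: "t \<le> length ms \<Longrightarrow> x \<in> C t \<Longrightarrow> \<exists>s<t. \<exists>j. ms ! s = Compute j x"
proof (induction t)
  case 0
  thus ?case using init by simp
next
  case (Suc t)
  hence t: "t < length ms" by simp
  show ?case
  proof (cases "x \<in> C t")
    case True
    thus ?thesis using Suc.IH t less_SucI by fastforce
  next
    case False
    thus ?thesis using Suc.prems C_Suc[OF t] by (cases "ms ! t") auto
  qed
qed

lemma Compute_unique:
  assumes "s < length ms" "s' < length ms" "ms ! s = Compute j x" "ms ! s' = Compute j' x"
  shows "s = s'"
proof -
  have "\<not> s < s'" if "s' < length ms" "ms ! s = Compute j x" "ms ! s' = Compute j' x" for s s' j j'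
  proof
    assume "s < s'"
    hence "x \<in> C (Suc s)" using C_Suc[of s] that by simp
    also have "C (Suc s) \<subseteq> C s'" using \<open>s < s'\<close> that(1) by (intro evaluated_mono) auto
    finally show False using move_enabled[OF that(1)] that(3) by simp
  qed
  thus ?thesis using assms by (meson linorder_neqE_nat)
qed

lemma fast_memory_source:
  assumes "\<alpha> \<le> t" "t \<le> length ms" "x \<in> R t j"
  shows "x \<in> R \<alpha> j \<or>
    (\<exists>s. \<alpha> \<le> s \<and> s < t \<and> (ms ! s = Load j x \<or> ms ! s = Compute j x \<or> (\<exists>j'. ms ! s = Send j' j x)))"
  using assms
proof (induction t rule: dec_induct)
  case (step t)
  hence t: "t < length ms" by simp
  show ?case
  proof (cases "x \<in> R t j")
    case True
    thus ?thesis using step by (meson less_SucI Suc_leD)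
  next
    case False
    hence "ms ! t = Load j x \<or> ms ! t = Compute j x \<or> (\<exists>j'. ms ! t = Send j' j x)"
      using step.prems R_Suc[OF t] by (cases "ms ! t") (auto split: if_splits)
    thus ?thesis using step.hyps(1) by blast
  qed
qed simp

lemma Compute_before_successor:
  assumes ta: "ta < length ms" "ms ! ta = Compute j a"
    and tb: "tb < length ms" "ms ! tb = Compute j' b" and ab: "(a, b) \<in> E"
  shows "ta < tb"
proof (rule ccontr)
  assume "\<not> ta < tb"
  hence "C tb \<subseteq> C ta" using ta(1) by (intro evaluated_mono) auto
  moreover have "a \<in> C tb"
    using move_enabled[OF tb(1)] tb(2) ab fast_memory_evaluated[of tb j'] tb(1) by auto
  ultimately show False using move_enabled[OF ta(1)] ta(2) by auto
qed

definition held_only_by :: "nat \<Rightarrow> nat \<Rightarrow> nat \<Rightarrow> bool" where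
  "held_only_by j x t \<longleftrightarrow> x \<notin> S t \<and> (\<forall>i. i \<noteq> j \<longrightarrow> x \<notin> R t i)"

definition discarded :: "nat \<Rightarrow> nat \<Rightarrow> bool" where
  "discarded x t \<longleftrightarrow> x \<notin> S t \<and> (\<forall>i. x \<notin> R t i)"

lemma held_only_by_Compute:
  assumes "t < length ms" "ms ! t = Compute j x"
  shows "held_only_by j x (Suc t)"
  using assms move_enabled[OF assms(1)] slow_memory_evaluated[of t] fast_memory_evaluated[of t]
  unfolding held_only_by_def by (auto simp: R_Suc S_Suc)

lemma held_only_by_Suc:
  assumes t: "t < length ms" and "x \<in> C t" "held_only_by j x t"
    and "\<not> (writes_out j (ms ! t) \<and> move_vertex (ms ! t) = x)"
  shows "held_only_by j x (Suc t)"
  using assms move_enabled[OF t] unfolding held_only_by_def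
  by (cases "ms ! t") (auto simp: R_Suc[OF t] S_Suc[OF t])

lemma discarded_Suc:
  assumes t: "t < length ms" and "x \<in> C t" "discarded x t"
  shows "discarded x (Suc t)"
  using assms move_enabled[OF t] unfolding discarded_def
  by (cases "ms ! t") (auto simp: R_Suc[OF t] S_Suc[OF t])

lemma held_only_by_persists:
  assumes "t \<le> t'" "t' \<le> length ms" "x \<in> C t" "held_only_by j x t"
    and "\<And>s. t \<le> s \<Longrightarrow> s < t' \<Longrightarrow> \<not> (writes_out j (ms ! s) \<and> move_vertex (ms ! s) = x)"
  shows "held_only_by j x t'"
  using assms
proof (induction t' rule: dec_induct)
  case (step t')
  have "x \<in> C t'" using evaluated_mono[of t t'] step by auto
  thus ?case using held_only_by_Suc step by simp
qed simp

lemma discarded_persists: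
  assumes "t \<le> t'" "t' \<le> length ms" "x \<in> C t" "discarded x t"
  shows "discarded x t'"
  using assms
proof (induction t' rule: dec_induct)
  case (step t')
  have "x \<in> C t'" using evaluated_mono[of t t'] step by auto
  thus ?case using discarded_Suc step by simp
qed simp

(* The successor b of a is evaluated after a, by another processor or after the segment; in
   both cases a must survive the segment in the fast memory of j or be written out by j. *)
lemma out_boundary_evaluated_in:
  assumes E: "E \<subseteq> {0..<n} \<times> {0..<n}" and total: "C (length ms) = {0..<n}"
    and \<beta>: "\<beta> \<le> length ms"
  shows "out_boundary E (evaluated_in ms j \<alpha> \<beta>) \<subseteq> R \<beta> j \<union> written_in ms j \<alpha> \<beta>"
proof
  fix a assume "a \<in> out_boundary E (evaluated_in ms j \<alpha> \<beta>)"
  then obtain b ta where ab: "(a, b) \<in> E" and b: "b \<notin> evaluated_in ms j \<alpha> \<beta>"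
    and ta: "\<alpha> \<le> ta" "ta < \<beta>" and a: "ms ! ta = Compute j a"
    unfolding out_boundary_def evaluated_in_def by auto
  have ta_len: "ta < length ms" using ta \<beta> by simp
  have "b \<in> C (length ms)" using ab E total by auto
  then obtain tb j' where tb: "tb < length ms" "ms ! tb = Compute j' b"
    using evaluated_has_Compute by blast
  have a_tb: "a \<in> R tb j'" using move_enabled[OF tb(1)] tb(2) ab by simp
  have "ta < tb" by (rule Compute_before_successor[OF ta_len a tb ab])
  show "a \<in> R \<beta> j \<union> written_in ms j \<alpha> \<beta>"
  proof (rule ccontr)
    assume "a \<notin> R \<beta> j \<union> written_in ms j \<alpha> \<beta>"
    hence not_R: "a \<notin> R \<beta> j"
      and no_write: "\<And>s. \<alpha> \<le> s \<Longrightarrow> s < \<beta> \<Longrightarrow> \<not> (writes_out j (ms ! s) \<and> move_vertex (ms ! s) = a)"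
      unfolding written_in_def by (auto simp: image_iff)
    have a_C: "a \<in> C (Suc ta)" using C_Suc[OF ta_len] a by simp
    have held: "held_only_by j a t" if "Suc ta \<le> t" "t \<le> \<beta>" for t
      using held_only_by_persists[OF that(1) _ a_C held_only_by_Compute[OF ta_len a]]
        that ta \<beta> no_write by simp
    show False
    proof (cases "tb < \<beta>")
      case True
      hence "j' \<noteq> j" using b tb(2) ta \<open>ta < tb\<close> unfolding evaluated_in_def by auto
      thus False using held[of tb] True \<open>ta < tb\<close> a_tb unfolding held_only_by_def by auto
    next
      case False
      have "discarded a \<beta>" using held[of \<beta>] not_R ta unfolding held_only_by_def discarded_def by auto
      moreover have "a \<in> C \<beta>" using evaluated_mono[of "Suc ta" \<beta>] a_C ta \<beta> by auto
      ultimately have "discarded a tb" using discarded_persists[of \<beta> tb] False tb(1) by simp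
      thus False using a_tb unfolding discarded_def by simp
    qed
  qed
qed

lemma in_boundary_evaluated_in:
  assumes "\<beta> \<le> length ms"
  shows "in_boundary E (evaluated_in ms j \<alpha> \<beta>) \<subseteq> R \<alpha> j \<union> read_in ms j \<alpha> \<beta>"
proof
  fix b assume "b \<in> in_boundary E (evaluated_in ms j \<alpha> \<beta>)"
  then obtain a ta where ba: "(b, a) \<in> E" and b: "b \<notin> evaluated_in ms j \<alpha> \<beta>"
    and ta: "\<alpha> \<le> ta" "ta < \<beta>" and a: "ms ! ta = Compute j a"
    unfolding in_boundary_def evaluated_in_def by auto
  have ta_len: "ta < length ms" using ta assms by simp
  have "b \<in> R ta j" using move_enabled[OF ta_len] a ba by simp
  from fast_memory_source[OF ta(1) _ this] ta_len
  consider "b \<in> R \<alpha> j"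
    | s where "\<alpha> \<le> s" "s < ta" "ms ! s = Load j b \<or> ms ! s = Compute j b \<or> (\<exists>j'. ms ! s = Send j' j b)"
    by auto
  thus "b \<in> R \<alpha> j \<union> read_in ms j \<alpha> \<beta>"
  proof cases
    case (2 s)
    hence "ms ! s \<noteq> Compute j b" using b ta unfolding evaluated_in_def by auto
    hence "reads_in j (ms ! s) \<and> move_vertex (ms ! s) = b" using 2 by auto
    thus ?thesis using 2 ta unfolding read_in_def by force
  qed simp
qed

lemma boundary_evaluated_in_le:
  assumes E: "E \<subseteq> {0..<n} \<times> {0..<n}" and total: "C (length ms) = {0..<n}"
    and "\<alpha> \<le> \<beta>" "\<beta> \<le> length ms"
  shows "card (out_boundary E (evaluated_in ms j \<alpha> \<beta>)) + card (in_boundary E (evaluated_in ms j \<alpha> \<beta>))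
    \<le> 2 * M + (\<Sum>t\<in>{\<alpha>..<\<beta>}. move_io j (ms ! t))"
proof -
  have fin: "finite (written_in ms j \<alpha> \<beta>)" "finite (read_in ms j \<alpha> \<beta>)"
    unfolding written_in_def read_in_def by auto
  have "card (out_boundary E (evaluated_in ms j \<alpha> \<beta>)) \<le> card (R \<beta> j \<union> written_in ms j \<alpha> \<beta>)"
    using out_boundary_evaluated_in[OF E total assms(4)] fast_memory_finite[OF assms(4)] fin
    by (intro card_mono) auto
  also have "\<dots> \<le> M + card (written_in ms j \<alpha> \<beta>)"
    using card_Un_le[of "R \<beta> j" "written_in ms j \<alpha> \<beta>"] card_fast_memory_le[OF assms(4), of j] by linarith
  finally have out: "card (out_boundary E (evaluated_in ms j \<alpha> \<beta>)) \<le> M + card (written_in ms j \<alpha> \<beta>)" .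
  have "card (in_boundary E (evaluated_in ms j \<alpha> \<beta>)) \<le> card (R \<alpha> j \<union> read_in ms j \<alpha> \<beta>)"
    using in_boundary_evaluated_in[OF assms(4)] fast_memory_finite[of \<alpha>] assms(3,4) fin
    by (intro card_mono) auto
  also have "\<dots> \<le> M + card (read_in ms j \<alpha> \<beta>)"
    using card_Un_le[of "R \<alpha> j" "read_in ms j \<alpha> \<beta>"] card_fast_memory_le[of \<alpha> j] assms(3,4) by linarith
  finally show ?thesis using out card_written_in_read_in_le[of ms j \<alpha> \<beta>] by linarith
qed

lemma card_evaluated_in:
  assumes "\<alpha> \<le> \<beta>" "\<beta> \<le> length ms"
  shows "card (evaluated_in ms j \<alpha> \<beta>) = evaluations ms j \<beta> - evaluations ms j \<alpha>"
proof -
  define T where "T = {t. \<alpha> \<le> t \<and> t < \<beta> \<and> (\<exists>v. ms ! t = Compute j v)}"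
  have "evaluated_in ms j \<alpha> \<beta> = (\<lambda>t. move_vertex (ms ! t)) ` T"
  proof (intro equalityI subsetI)
    fix v assume "v \<in> evaluated_in ms j \<alpha> \<beta>"
    then obtain t where "\<alpha> \<le> t" "t < \<beta>" "ms ! t = Compute j v" unfolding evaluated_in_def by auto
    hence "t \<in> T" "move_vertex (ms ! t) = v" unfolding T_def by auto
    thus "v \<in> (\<lambda>t. move_vertex (ms ! t)) ` T" by (metis image_eqI)
  qed (auto simp: T_def evaluated_in_def)
  moreover have "inj_on (\<lambda>t. move_vertex (ms ! t)) T"
  proof (rule inj_onI)
    fix s s' assume "s \<in> T" "s' \<in> T" and eq: "move_vertex (ms ! s) = move_vertex (ms ! s')"
    then obtain v v' where "ms ! s = Compute j v" "ms ! s' = Compute j v'"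
      and "s < length ms" "s' < length ms"
      unfolding T_def using assms(2) by auto
    thus "s = s'" using eq Compute_unique by simp
  qed
  moreover have "evaluations ms j \<beta> = evaluations ms j \<alpha> + card T"
  proof -
    have "{s. s < \<beta> \<and> (\<exists>v. ms ! s = Compute j v)} = {s. s < \<alpha> \<and> (\<exists>v. ms ! s = Compute j v)} \<union> T"
      using assms(1) unfolding T_def by auto
    hence "evaluations ms j \<beta> = card ({s. s < \<alpha> \<and> (\<exists>v. ms ! s = Compute j v)} \<union> T)"
      unfolding evaluations_def by simp
    also have "\<dots> = evaluations ms j \<alpha> + card T"
      unfolding evaluations_def by (rule card_Un_disjoint) (auto simp: T_def)
    finally show ?thesis .
  qed
  ultimately show ?thesis by (simp add: card_image)
qed

lemma evaluated_in_subset: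
  assumes "\<beta> \<le> length ms"
  shows "evaluated_in ms j \<alpha> \<beta> \<subseteq> {..<n}"
proof
  fix v assume "v \<in> evaluated_in ms j \<alpha> \<beta>"
  then obtain t where "t < \<beta>" "ms ! t = Compute j v" unfolding evaluated_in_def by auto
  thus "v \<in> {..<n}" using move_enabled[of t] assms by simp
qed

lemma evaluated_in_disjoint:
  assumes "\<beta> \<le> \<alpha>'" "\<beta>' \<le> length ms"
  shows "evaluated_in ms j \<alpha> \<beta> \<inter> evaluated_in ms j \<alpha>' \<beta>' = {}"
proof -
  have False if "t < \<beta>" "\<alpha>' \<le> t'" "t' < \<beta>'" "ms ! t = Compute j v" "ms ! t' = Compute j v"
    for t t' v
    using Compute_unique[of t t'] that assms by simp
  thus ?thesis unfolding evaluated_in_def by blast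
qed

lemma sum_evaluations:
  assumes total: "C (length ms) = {0..<n}"
  shows "(\<Sum>j<p. evaluations ms j (length ms)) = n"
proof -
  define T where "T j = {s. s < length ms \<and> (\<exists>v. ms ! s = Compute j v)}" for j
  define f where "f s = move_vertex (ms ! s)" for s
  have "(\<Sum>j<p. evaluations ms j (length ms)) = card (\<Union>j<p. T j)"
    unfolding evaluations_def T_def by (subst card_UN_disjoint) auto
  also have "(\<Union>j<p. T j) = {s. s < length ms \<and> (\<exists>j v. ms ! s = Compute j v)}"
    using move_enabled unfolding T_def by fastforce
  also have "card \<dots> = card (C (length ms))"
  proof (rule bij_betw_same_card[of f], rule bij_betw_imageI)
    show "inj_on f {s. s < length ms \<and> (\<exists>j v. ms ! s = Compute j v)}"
      unfolding f_def using Compute_unique by (intro inj_onI) force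
    show "f ` {s. s < length ms \<and> (\<exists>j v. ms ! s = Compute j v)} = C (length ms)"
    proof (intro equalityI subsetI)
      fix x assume "x \<in> C (length ms)"
      then obtain s j where "s < length ms" "ms ! s = Compute j x"
        using evaluated_has_Compute by blast
      thus "x \<in> f ` {s. s < length ms \<and> (\<exists>j v. ms ! s = Compute j v)}" unfolding f_def by force
    next
      fix x assume "x \<in> f ` {s. s < length ms \<and> (\<exists>j v. ms ! s = Compute j v)}"
      then obtain s j where s: "s < length ms" "ms ! s = Compute j x" unfolding f_def by auto
      hence "x \<in> C (Suc s)" using C_Suc by simp
      thus "x \<in> C (length ms)" using evaluated_mono[of "Suc s" "length ms"] s by auto
    qed
  qed
  finally show ?thesis using total by simp
qed

lemma evaluation_segments:
  assumes "k * m \<le> evaluations ms j (length ms)"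
  obtains a where "\<And>i i'. i \<le> i' \<Longrightarrow> i' \<le> k \<Longrightarrow> a i \<le> a i'" and "a k \<le> length ms"
    and "\<And>i. i < k \<Longrightarrow> card (evaluated_in ms j (a i) (a (Suc i))) = m"
proof -
  define c where "c = evaluations ms j"
  define a where "a i = (LEAST t. i * m \<le> c t)" for i
  have level: "i * m \<le> c (length ms)" if "i \<le> k" for i
    using assms that unfolding c_def by (meson le_trans mult_le_mono1)
  have len: "a i \<le> length ms" and hit: "c (a i) = i * m" if "i \<le> k" for i
    using Least_level_exact[of c, OF _ _ level[OF that]] evaluations_Suc_le
    unfolding a_def c_def by auto
  have mono: "a i \<le> a i'" if "i \<le> i'" "i' \<le> k" for i i'
  proof -
    have "i * m \<le> c (a i')" using hit[OF that(2)] that(1) by simp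
    thus ?thesis unfolding a_def by (rule Least_le)
  qed
  show thesis
  proof (rule that[OF mono len])
    fix i assume "i < k"
    thus "card (evaluated_in ms j (a i) (a (Suc i))) = m"
      using card_evaluated_in[OF mono len] hit unfolding c_def by simp
  qed simp_all
qed

lemma segments_disjoint:
  assumes mono: "\<And>i i'. i \<le> i' \<Longrightarrow> i' \<le> k \<Longrightarrow> a i \<le> a i'" and len: "a k \<le> length ms"
  shows "disjoint_family_on (\<lambda>i. evaluated_in ms j (a i) (a (Suc i))) {..<k}"
proof -
  have disj: "evaluated_in ms j (a i) (a (Suc i)) \<inter> evaluated_in ms j (a i') (a (Suc i')) = {}"
    if "i < i'" "i' < k" for i i'
    using that mono[of "Suc i'" k] len by (intro evaluated_in_disjoint mono) auto
  show ?thesis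
    unfolding disjoint_family_on_def by (metis Int_commute disj lessThan_iff linorder_neqE_nat)
qed

lemma segments_boundary_le:
  assumes E: "E \<subseteq> {0..<n} \<times> {0..<n}" and total: "C (length ms) = {0..<n}"
    and mono: "\<And>i i'. i \<le> i' \<Longrightarrow> i' \<le> k \<Longrightarrow> a i \<le> a i'" and len: "a k \<le> length ms"
  shows "(\<Sum>i<k. card (out_boundary E (evaluated_in ms j (a i) (a (Suc i)))) +
      card (in_boundary E (evaluated_in ms j (a i) (a (Suc i))))) \<le> 2 * k * M + proc_io j ms"
proof -
  have "(\<Sum>i<k. card (out_boundary E (evaluated_in ms j (a i) (a (Suc i)))) +
      card (in_boundary E (evaluated_in ms j (a i) (a (Suc i)))))
    \<le> (\<Sum>i<k. 2 * M + (\<Sum>t\<in>{a i..<a (Suc i)}. move_io j (ms ! t)))"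
  proof (intro sum_mono boundary_evaluated_in_le[OF E total])
    fix i assume "i \<in> {..<k}"
    thus "a i \<le> a (Suc i)" "a (Suc i) \<le> length ms"
      using mono[of i "Suc i"] mono[of "Suc i" k] len by auto
  qed
  also have "\<dots> = 2 * k * M + (\<Sum>t\<in>{a 0..<a k}. move_io j (ms ! t))"
    by (simp add: sum.distrib sum_consecutive_intervals[of k a, OF mono])
  also have "\<dots> \<le> 2 * k * M + proc_io j ms"
    unfolding proc_io_eq_sum using len by (intro add_left_mono sum_mono2) auto
  finally show ?thesis .
qed

lemma busy_processor_segments:
  assumes E: "E \<subseteq> {0..<n} \<times> {0..<n}" and total: "C (length ms) = {0..<n}" and p: "0 < p"
  obtains j V where "j < p" and "\<And>i. i < k \<Longrightarrow> V i \<subseteq> {..<n}"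
    and "\<And>i. i < k \<Longrightarrow> card (V i) = n div (k * p)" and "disjoint_family_on V {..<k}"
    and "(\<Sum>i<k. card (out_boundary E (V i)) + card (in_boundary E (V i))) \<le> 2 * k * M + proc_io j ms"
proof -
  obtain j where j: "j < p" "n \<le> p * evaluations ms j (length ms)"
    using exists_ge_average[OF p sum_evaluations[OF total]] by blast
  have "p * (k * (n div (k * p))) \<le> n"
    by (metis div_times_less_eq_dividend mult.commute mult.left_commute)
  hence "p * (k * (n div (k * p))) \<le> p * evaluations ms j (length ms)" using j(2) by linarith
  hence "k * (n div (k * p)) \<le> evaluations ms j (length ms)" using p by simp
  from evaluation_segments[OF this] obtain a
    where mono: "\<And>i i'. i \<le> i' \<Longrightarrow> i' \<le> k \<Longrightarrow> a i \<le> a i'" and len: "a k \<le> length ms"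
    and card: "\<And>i. i < k \<Longrightarrow> card (evaluated_in ms j (a i) (a (Suc i))) = n div (k * p)"
    by blast
  show thesis
  proof (rule that[OF j(1) _ card segments_disjoint[of k a, OF mono len]
        segments_boundary_le[of k a, OF E total mono len]])
    fix i assume "i < k"
    thus "evaluated_in ms j (a i) (a (Suc i)) \<subseteq> {..<n}"
      using mono[of "Suc i" k] len by (intro evaluated_in_subset) simp
  qed
qed

end

theorem theorem4p6:
  fixes n p M k :: nat and E :: "(nat \<times> nat) set" and ms :: "move list" and ls :: "real list"
  assumes "comp_graph n E"
    and "p \<ge> 1"
    and "valid_par_schedule n E p M ms"
    and "sorted_eigenvalues (laplacian n E) ls"
    and "k \<ge> 1"
  shows "\<exists>j<p. real (proc_io j ms) \<ge>
           real (n div (k * p)) * (\<Sum>i<k. ls ! i) - 2 * real k * real M"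
proof -
  have E: "E \<subseteq> {0..<n} \<times> {0..<n}" using assms(1) unfolding comp_graph_def by blast
  obtain R S C where run: "par_run n E p M ms R S C" and total: "C (length ms) = {0..<n}"
    using valid_par_schedule_run[OF assms(3)] by blast
  have p: "0 < p" using assms(2) by simp
  obtain j V where j: "j < p" and V: "\<And>i. i < k \<Longrightarrow> V i \<subseteq> {..<n}"
      "\<And>i. i < k \<Longrightarrow> card (V i) = n div (k * p)" and disj: "disjoint_family_on V {..<k}"
    and io: "(\<Sum>i<k. card (out_boundary E (V i)) + card (in_boundary E (V i))) \<le> 2 * k * M + proc_io j ms"
    using par_run.busy_processor_segments[OF run E total p, where k = k] by blast
  have "real (n div (k * p)) * (\<Sum>i<k. ls ! i) \<le>
      (\<Sum>i<k. real (card (out_boundary E (V i)) + card (in_boundary E (V i))))"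
    using laplacian_eigenvalue_sum_le_boundaries[OF E assms(4) _ V disj] assms(5) by simp
  also have "\<dots> \<le> real (2 * k * M + proc_io j ms)"
    using io by (simp only: of_nat_sum[symmetric] of_nat_le_iff)
  finally show ?thesis using j by (intro exI[of _ j]) auto
qed

end
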